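(* Let $N\ge 1$ be an integer, let $\Gamma$ be the principled parametric grammar $\Gamma^{(N)}$ defined below, and let $w$ be the string defined below. If $P,Q$ are positive integers with $P\le Q$ and $PQ=N$, then $w\in L(\Gamma_{s_P})$.
   Context: Let $a=\lceil\log_2\sqrt N\rceil$ and $b=\lceil\log_2 N\rceil$. The grammar $\Gamma^{(N)}$ has nonterminals $\mathtt S$, $A_0,\dots,A_a$, $B_0,\dots,B_a$, $C_0,\dots,C_{b+1}$, $Z_0,\dots,Z_b$, terminals $c_0,\dots,c_b$, and start symbol $\mathtt S$. Its rules are string-rewriting productions $\alpha\to\beta$ (possibly with more than one symbol on the left). Fixed rules (present for every parameter setting): $\mathtt S\to A_a\mathtt S$; $\mathtt S\to\varepsilon$; $B_j\to B_{j-1}B_{j-1}$ for $1\le j\le a$; $B_0\to C_0$; and for each $k\in\{0,\dots,b\}$: $C_kC_k\to C_kZ_k$, $C_kZ_k\to C_{k+1}Z_k$, $C_{k+1}Z_k\to C_{k+1}$, and $C_k\to c_k$. Parametric groups (exactly one alternative is chosen from each): $(A_0\to B_0,\ A_0\to\varepsilon)$, and for each $j\in\{1,\dots,a\}$, $(A_j\to A_{j-1},\ A_j\to B_jA_{j-1})$. A parameter setting $s$ is a choice of one alternative from each parametric group; $\Gamma_s$ is the grammar whose rules are the fixed rules together with the chosen alternatives, and $L(\Gamma_s)$ is the set of terminal strings derivable from $\mathtt S$. To $s$ associate bits $p_0,\dots,p_a$: $p_0=1$ iff $A_0\to B_0$ is chosen, and for $j\ge1$, $p_j=1$ iff $A_j\to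 B_jA_{j-1}$ is chosen; put $P_s=\sum_{j=0}^a p_j2^j$. Conversely, for an integer $0\le P<2^{a+1}$, $s_P$ is the setting whose bits are the binary digits of $P$. The string $w$ is $c_{i_1}c_{i_2}\cdots c_{i_r}$, where $i_1<\dots<i_r$ are the positions (counting from $0$ at the least significant digit) of the digits equal to $1$ in the binary representation of $N$. *)

theory Defs
  imports Complex_Main
begin

datatype sym = Start | A nat | B nat | C nat | Z nat | Tm nat

definition par_a :: "nat \<Rightarrow> nat" where
  "par_a N = nat \<lceil>log 2 (sqrt (real N))\<rceil>"

definition par_b :: "nat \<Rightarrow> nat" where
  "par_b N = nat \<lceil>log 2 (real N)\<rceil>"

text \<open>A parameter setting is given by its bits p_0..p_a (p j = True iff bit j is 1).
  Rules of Gamma_s as string-rewriting productions (lhs, rhs).\<close>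
definition rules :: "nat \<Rightarrow> (nat \<Rightarrow> bool) \<Rightarrow> (sym list \<times> sym list) set" where
  "rules N p =
     {([Start], [A (par_a N), Start]), ([Start], [])}
   \<union> {([B j], [B (j - 1), B (j - 1)]) | j. 1 \<le> j \<and> j \<le> par_a N}
   \<union> {([B 0], [C 0])}
   \<union> {([C k, C k], [C k, Z k]) | k. k \<le> par_b N}
   \<union> {([C k, Z k], [C (Suc k), Z k]) | k. k \<le> par_b N}
   \<union> {([C (Suc k), Z k], [C (Suc k)]) | k. k \<le> par_b N}
   \<union> {([C k], [Tm k]) | k. k \<le> par_b N}
   \<union> {([A 0], if p 0 then [B 0] else [])}
   \<union> {([A j], if p j then [B j, A (j - 1)] else [A (j - 1)]) | j. 1 \<le> j \<and> j \<le> par_a N}"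

definition rstep :: "(sym list \<times> sym list) set \<Rightarrow> sym list \<Rightarrow> sym list \<Rightarrow> bool" where
  "rstep R x y \<longleftrightarrow> (\<exists>u v l r. (l, r) \<in> R \<and> x = u @ l @ v \<and> y = u @ r @ v)"

text \<open>Language: terminal strings (lists of terminal indices k, standing for c_k) derivable from S.\<close>
definition lang :: "nat \<Rightarrow> (nat \<Rightarrow> bool) \<Rightarrow> nat list set" where
  "lang N p = {t. (rstep (rules N p))\<^sup>*\<^sup>* [Start] (map Tm t)}"

definition setting :: "nat \<Rightarrow> (nat \<Rightarrow> bool)" where
  "setting P = (\<lambda>j. odd (P div 2 ^ j))"

text \<open>The string w: indices of the 1-digits of N in increasing order (all such positions are \<le> N).\<close>
definition wstr :: "nat \<Rightarrow> nat list" where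
  "wstr N = filter (\<lambda>i. odd (N div 2 ^ i)) [0..<Suc N]"

end

theory Submission
  imports Defs
begin

(* Under the setting s_P the nonterminal A_a derives exactly P copies of C_0:
   A_j contributes 2^j copies (via B_j) for each set bit p_j, and P \<le> 2^a because
   P\<^sup>2 \<le> PQ = N.  Hence S derives A_a^Q and then C_0^N.  The C-rules implement a binary
   counter: C_k C_k rewrites to C_{k+1}, and a lone C_k becomes the terminal c_k; so
   C_0^m derives the terminals of the 1-digits of m in increasing order, provided all
   carries stay below level b+1, which holds as N \<le> 2^b. *)

abbreviation derives :: "nat \<Rightarrow> (nat \<Rightarrow> bool) \<Rightarrow> sym list \<Rightarrow> sym list \<Rightarrow> bool" where
  "derives N p \<equiv> (rstep (rules N p))\<^sup>*\<^sup>*"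

lemma rstep_in_context:
  assumes "rstep R x y"
  shows "rstep R (u @ x @ v) (u @ y @ v)"
proof -
  obtain u' v' l r where "(l, r) \<in> R" "x = u' @ l @ v'" "y = u' @ r @ v'"
    using assms by (auto simp: rstep_def)
  then have "u @ x @ v = (u @ u') @ l @ (v' @ v)" "u @ y @ v = (u @ u') @ r @ (v' @ v)"
    by simp_all
  with \<open>(l, r) \<in> R\<close> show ?thesis unfolding rstep_def by blast
qed

lemma derivation_in_context:
  "(rstep R)\<^sup>*\<^sup>* x y \<Longrightarrow> (rstep R)\<^sup>*\<^sup>* (u @ x @ v) (u @ y @ v)"
  by (induction rule: rtranclp_induct) (auto intro: rtranclp.rtrancl_into_rtrancl rstep_in_context)

lemma derivation_append:
  assumes "(rstep R)\<^sup>*\<^sup>* x y" and "(rstep R)\<^sup>*\<^sup>* x' y'"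
  shows "(rstep R)\<^sup>*\<^sup>* (x @ x') (y @ y')"
  using derivation_in_context[OF assms(1), of "[]" x'] derivation_in_context[OF assms(2), of y "[]"]
  by auto

lemma derivation_replicate:
  "(rstep R)\<^sup>*\<^sup>* x y \<Longrightarrow> (rstep R)\<^sup>*\<^sup>* (concat (replicate n x)) (concat (replicate n y))"
  by (induction n) (auto intro: derivation_append)

lemma rule_derivation: "(l, r) \<in> R \<Longrightarrow> (rstep R)\<^sup>*\<^sup>* l r"
  unfolding rstep_def by (rule r_into_rtranclp, rule exI[of _ "[]"], rule exI[of _ "[]"]) auto

lemma concat_replicate_replicate: "concat (replicate n (replicate m x)) = replicate (n * m) x"
  by (induction n) (auto simp: replicate_add)

fun bits :: "nat \<Rightarrow> nat list" where
  "bits m = (if m = 0 then [] else (if odd m then [0] else []) @ map Suc (bits (m div 2)))"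

declare bits.simps[simp del]

lemma filter_odd_digits:
  "m < 2 ^ n \<Longrightarrow> filter (\<lambda>i. odd (m div 2 ^ i)) [0..<n] = bits m"
proof (induction n arbitrary: m)
  case 0
  then show ?case by (simp add: bits.simps)
next
  case (Suc n)
  have upt: "[0..<Suc n] = 0 # map Suc [0..<n]"
    by (simp add: upt_conv_Cons map_Suc_upt)
  have shift: "filter (\<lambda>i. odd (m div 2 ^ i)) (map Suc [0..<n])
             = map Suc (filter (\<lambda>i. odd (m div 2 div 2 ^ i)) [0..<n])"
    by (simp add: filter_map o_def div_mult2_eq)
  have "filter (\<lambda>i. odd (m div 2 div 2 ^ i)) [0..<n] = bits (m div 2)"
    using Suc by (intro Suc.IH) auto
  then show ?case
    unfolding upt using shift by (subst bits.simps) (auto simp: filter_False)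
qed

lemma wstr_eq_bits: "wstr N = bits N"
proof -
  have "N < 2 ^ N" by (rule less_exp)
  also have "\<dots> < 2 ^ Suc N" by simp
  finally have "N < 2 ^ Suc N" .
  then show ?thesis unfolding wstr_def by (rule filter_odd_digits)
qed

definition bit_value :: "(nat \<Rightarrow> bool) \<Rightarrow> nat \<Rightarrow> nat" where
  "bit_value p j = (\<Sum>i\<le>j. if p i then 2 ^ i else 0)"

lemma bit_value_setting: "bit_value (setting P) j = P mod 2 ^ Suc j"
proof (induction j)
  case 0
  then show ?case
    by (cases "odd P") (simp_all add: bit_value_def setting_def odd_iff_mod_2_eq_one even_iff_mod_2_eq_zero)
next
  case (Suc j)
  have "P mod 2 ^ Suc (Suc j) = (if odd (P div 2 ^ Suc j) then 2 ^ Suc j else 0) + P mod 2 ^ Suc j"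
    using mod_mult2_eq[of P "2 ^ Suc j" 2] by (auto simp: mult.commute odd_iff_mod_2_eq_one)
  then show ?case using Suc by (simp add: bit_value_def setting_def)
qed

lemma le_pow2_ceiling_log: "(x::real) \<ge> 1 \<Longrightarrow> x \<le> 2 ^ nat \<lceil>log 2 x\<rceil>"
proof -
  assume x: "x \<ge> 1"
  have "x = 2 powr log 2 x" using x by simp
  also have "\<dots> \<le> 2 powr real_of_int \<lceil>log 2 x\<rceil>" by (rule powr_mono) auto
  also have "\<dots> = 2 ^ nat \<lceil>log 2 x\<rceil>" using x by (simp add: powr_realpow[symmetric])
  finally show ?thesis .
qed

lemma N_le_pow_b: "N \<ge> 1 \<Longrightarrow> N \<le> 2 ^ par_b N"
  using le_pow2_ceiling_log[of "real N"] unfolding par_b_def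
  by (metis of_nat_1 of_nat_le_iff of_nat_numeral of_nat_power)

text \<open>The smaller factor is at most the square root of N, hence at most 2^a.\<close>
lemma small_factor_le_pow_a:
  assumes "P \<le> Q" and "P * Q = N" and "N \<ge> 1"
  shows "P \<le> 2 ^ par_a N"
proof -
  have "P * P \<le> N" using assms mult_le_mono2[of P Q P] by simp
  then have "(real P)\<^sup>2 \<le> real N" by (metis of_nat_le_iff of_nat_mult power2_eq_square)
  then have "real P \<le> sqrt (real N)" by (rule real_le_rsqrt)
  also have "\<dots> \<le> 2 ^ par_a N"
    using le_pow2_ceiling_log[of "sqrt (real N)"] assms(3) unfolding par_a_def by simp
  finally show ?thesis by (metis of_nat_le_iff of_nat_numeral of_nat_power)
qed

lemma B_derivation: "j \<le> par_a N \<Longrightarrow> derives N p [B j] (replicate (2 ^ j) (C 0))"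
proof (induction j)
  case 0
  then show ?case by (simp add: rule_derivation rules_def)
next
  case (Suc j)
  have "derives N p [B (Suc j)] ([B j] @ [B j])"
    using Suc.prems by (simp add: rule_derivation rules_def)
  also have "derives N p ([B j] @ [B j]) (replicate (2 ^ j) (C 0) @ replicate (2 ^ j) (C 0))"
    using Suc by (intro derivation_append) auto
  finally show ?case by (simp add: replicate_add[symmetric] mult_2)
qed

lemma A_derivation: "j \<le> par_a N \<Longrightarrow> derives N p [A j] (replicate (bit_value p j) (C 0))"
proof (induction j)
  case 0
  have "derives N p [A 0] (if p 0 then [B 0] else [])"
    by (simp add: rule_derivation rules_def)
  moreover have "derives N p [B 0] [C 0]"
    by (simp add: rule_derivation rules_def)
  ultimately show ?case by (auto simp: bit_value_def split: if_splits)
next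
  case (Suc j)
  have step: "derives N p [A (Suc j)]
               ((if p (Suc j) then [B (Suc j)] else []) @ [A j])"
    using Suc.prems by (simp add: rule_derivation rules_def)
  have "derives N p (if p (Suc j) then [B (Suc j)] else [])
          (replicate (if p (Suc j) then 2 ^ Suc j else 0) (C 0))"
    using B_derivation[OF Suc.prems] by auto
  from derivation_append[OF this Suc.IH[OF Suc_leD[OF Suc.prems]]]
  have "derives N p ((if p (Suc j) then [B (Suc j)] else []) @ [A j])
          (replicate (bit_value p (Suc j)) (C 0))"
    by (simp only: replicate_add[symmetric] bit_value_def sum.atMost_Suc add.commute)
  with step show ?case by (rule rtranclp_trans)
qed

lemma carry_derivation:
  assumes "k \<le> par_b N"
  shows "derives N p (replicate (2 * m) (C k)) (replicate m (C (Suc k)))"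
proof -
  have "derives N p [C k, C k] [C k, Z k]"
    using assms by (simp add: rule_derivation rules_def)
  also have "derives N p [C k, Z k] [C (Suc k), Z k]"
    using assms by (simp add: rule_derivation rules_def)
  also have "derives N p [C (Suc k), Z k] [C (Suc k)]"
    using assms by (simp add: rule_derivation rules_def)
  finally have "derives N p (concat (replicate m [C k, C k])) (concat (replicate m [C (Suc k)]))"
    by (rule derivation_replicate)
  moreover have "concat (replicate m [C k, C k]) = replicate (2 * m) (C k)"
    using concat_replicate_replicate[of m 2 "C k"] by (simp add: numeral_2_eq_2 mult.commute)
  ultimately show ?thesis by simp
qed

lemma counter_derivation:
  "k \<le> Suc (par_b N) \<Longrightarrow> m < 2 ^ (Suc (par_b N) - k) \<Longrightarrow>
     derives N p (replicate m (C k)) (map Tm (map ((+) k) (bits m)))"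
proof (induction m arbitrary: k rule: less_induct)
  case (less m k)
  show ?case
  proof (cases "m = 0")
    case True
    then show ?thesis by (simp add: bits.simps)
  next
    case False
    have k: "k \<le> par_b N"
      using less.prems False by (cases "k = Suc (par_b N)") auto
    have "m div 2 < 2 ^ (Suc (par_b N) - Suc k)"
      using less.prems k by (simp add: Suc_diff_le less_mult_imp_div_less mult.commute)
    with k False have upper: "derives N p (replicate (m div 2) (C (Suc k)))
                               (map Tm (map ((+) (Suc k)) (bits (m div 2))))"
      by (intro less.IH) auto
    have carries: "derives N p (replicate (2 * (m div 2)) (C k))
                     (map Tm (map ((+) (Suc k)) (bits (m div 2))))"
      using carry_derivation[OF k] upper by (rule rtranclp_trans)
    have lowest: "derives N p (if odd m then [C k] else []) (map Tm (if odd m then [k] else []))"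
      using k by (simp add: rule_derivation rules_def)
    have "replicate m (C k) = replicate (if odd m then 1 else 0) (C k) @ replicate (2 * (m div 2)) (C k)"
      unfolding replicate_add[symmetric] by simp
    moreover have "replicate (if odd m then 1 else 0) (C k) = (if odd m then [C k] else [])"
      by simp
    moreover have "map ((+) k) (bits m) = (if odd m then [k] else []) @ map ((+) (Suc k)) (bits (m div 2))"
      using False by (subst bits.simps) (simp add: o_def)
    ultimately show ?thesis using derivation_append[OF lowest carries] by simp
  qed
qed

lemma start_derivation: "derives N p [Start] (replicate n (A (par_a N)))"
proof -
  have loop: "derives N p [Start] (replicate n (A (par_a N)) @ [Start])" for n
  proof (induction n)
    case (Suc n)
    have "derives N p [Start] [A (par_a N), Start]"
      by (simp add: rule_derivation rules_def)
    from derivation_append[OF rtranclp.rtrancl_refl this]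
    have "derives N p (replicate n (A (par_a N)) @ [Start]) (replicate (Suc n) (A (par_a N)) @ [Start])"
      by (simp add: replicate_append_same[symmetric])
    with Suc show ?case by (rule rtranclp_trans)
  qed simp
  have "derives N p [Start] []" by (simp add: rule_derivation rules_def)
  from derivation_append[OF rtranclp.rtrancl_refl this] loop[of n]
  show ?thesis by (simp add: rtranclp_trans)
qed

theorem mainTheorem5:
  fixes N P Q :: nat
  assumes "N \<ge> 1" and "P > 0" and "Q > 0" and "P \<le> Q" and "P * Q = N"
  shows "wstr N \<in> lang N (setting P)"
proof -
  let ?p = "setting P" and ?a = "par_a N"
  have "P < 2 ^ Suc ?a"
    using small_factor_le_pow_a[OF assms(4,5,1)] by (simp add: le_less_trans)
  then have "bit_value ?p ?a = P" by (simp add: bit_value_setting)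
  then have "derives N ?p [A ?a] (replicate P (C 0))" using A_derivation[of ?a N ?p] by simp
  from derivation_replicate[OF this, of Q]
  have copies: "derives N ?p (replicate Q (A ?a)) (replicate N (C 0))"
    using assms(5) by (simp add: concat_replicate_replicate mult.commute)
  have "N < 2 ^ (Suc (par_b N) - 0)" using N_le_pow_b[OF assms(1)] by (simp add: le_less_trans)
  then have "derives N ?p (replicate N (C 0)) (map Tm (bits N))"
    using counter_derivation[of 0 N N ?p] by (simp add: comp_def)
  with start_derivation[of N ?p Q] copies show ?thesis
    unfolding lang_def wstr_eq_bits by (auto intro: rtranclp_trans)
qed

end
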